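(* For any $T,n,m\in\mathbb{N}_+$ there exist a constant $C(n)$ depending only on $n$ and a function $\phi(t)=\sum_{k=1}^m\alpha_kt^{-\beta_k}$ with $\alpha_k\in\mathbb{R}$ and $\beta_k>1$ for all $k\in[m]$ such that $$\sum_{t=1}^\infty\big|\mathbb{I}\{t=T\}-\phi(t)\big|\le\frac{C(n)T^{1.01(n+1)}}{m^n}.$$
   Context: $\mathbb{I}\{\cdot\}$ denotes the indicator function; $[m]=\{1,\dots,m\}$. *)

theory Defs
  imports Complex_Main
begin

end

theory Submission
  imports Defs "HOL-Analysis.Summation_Tests" "HOL-Computational_Algebra.Polynomial"
begin

text \<open>The coefficients \<open>\<alpha>\<^sub>k\<close> are not constrained, so \<open>C = 1\<close> works for every \<open>n\<close>.
If \<open>m < T\<close>, then \<open>\<phi> = 0\<close> has total error \<open>1 \<le> (T/m)\<^sup>n\<close>. If \<open>m \<ge> T\<close>, take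
\<open>\<beta>\<^sub>k = k b\<close>, so that \<open>\<phi>(t) = p(t\<^sup>-\<^sup>b)\<close> for any polynomial \<open>p\<close> of degree \<open>\<le> m\<close> without
constant term. Let \<open>p\<close> vanish at \<open>0, 1\<^sup>-\<^sup>b, \<dots>, (T-1)\<^sup>-\<^sup>b\<close> with \<open>p(T\<^sup>-\<^sup>b) = 1\<close>. Then
the error vanishes for \<open>t \<le> T\<close>, and for \<open>t > T\<close>, once \<open>b\<close> is so large that the nodes
\<open>j\<^sup>-\<^sup>b\<close> (\<open>j < T\<close>) are at least twice \<open>T\<^sup>-\<^sup>b\<close>, it is at most \<open>2\<^sup>T\<^sup>-\<^sup>1 (T/t)\<^sup>b\<close>. The tail sum
of these bounds tends to \<open>0\<close> as \<open>b \<rightarrow> \<infinity>\<close>.\<close>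

definition peak_poly :: "(nat \<Rightarrow> 'a::field) \<Rightarrow> nat \<Rightarrow> 'a poly" where
  "peak_poly y T = smult (inverse (y T * (\<Prod>j\<in>{1..<T}. y T - y j)))
     (pCons 0 (\<Prod>j\<in>{1..<T}. [:- y j, 1:]))"

lemma poly_peak_poly:
  "poly (peak_poly y T) x = x * (\<Prod>j\<in>{1..<T}. x - y j) / (y T * (\<Prod>j\<in>{1..<T}. y T - y j))"
  by (simp add: peak_poly_def poly_prod field_simps)

lemma coeff_0_peak_poly: "coeff (peak_poly y T) 0 = 0"
  by (simp add: peak_poly_def)

lemma degree_peak_poly:
  assumes "T \<ge> 1"
  shows "degree (peak_poly y T) \<le> T"
proof -
  let ?q = "\<Prod>j\<in>{1..<T}. [:- y j, 1:]"
  have "degree ?q \<le> (\<Sum>j\<in>{1..<T}. degree [:- y j, 1:])"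
    using degree_prod_sum_le[of "{1..<T}" "\<lambda>j. [:- y j, 1:]"] by (simp add: o_def)
  then have "degree ?q \<le> T - 1"
    by simp
  have "degree (peak_poly y T) \<le> degree (pCons 0 ?q)"
    unfolding peak_poly_def by (rule degree_smult_le)
  also have "\<dots> \<le> Suc (degree ?q)"
    by (rule degree_pCons_le)
  finally show ?thesis
    using assms \<open>degree ?q \<le> T - 1\<close> by linarith
qed

lemma poly_peak_poly_node:
  assumes "j \<in> {1..<T}"
  shows "poly (peak_poly y T) (y j) = 0"
  using assms by (auto simp: poly_peak_poly prod_zero_iff)

lemma poly_peak_poly_peak:
  assumes "y T \<noteq> 0" "\<And>j. j \<in> {1..<T} \<Longrightarrow> y j \<noteq> y T"
  shows "poly (peak_poly y T) (y T) = 1"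
  using assms by (fastforce simp: poly_peak_poly)

lemma abs_poly_peak_poly_le:
  fixes y :: "nat \<Rightarrow> 'a::linordered_field"
  assumes "0 < y T" "0 \<le> x"
    and "\<And>j. j \<in> {1..<T} \<Longrightarrow> x \<le> y j \<and> 2 * y T \<le> y j"
  shows "\<bar>poly (peak_poly y T) x\<bar> \<le> 2 ^ (T - 1) * (x / y T)"
proof -
  have ratio_le_2: "0 \<le> \<bar>x - y j\<bar> / \<bar>y T - y j\<bar> \<and> \<bar>x - y j\<bar> / \<bar>y T - y j\<bar> \<le> 2"
    if "j \<in> {1..<T}" for j
  proof -
    have "\<bar>x - y j\<bar> \<le> y j" "y j \<le> 2 * \<bar>y T - y j\<bar>"
      using assms(1,2) assms(3)[OF that] by auto
    then show ?thesis
      using assms(1) assms(3)[OF that] by (auto simp: divide_le_eq)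
  qed
  have "\<bar>poly (peak_poly y T) x\<bar> = (x / y T) * (\<Prod>j\<in>{1..<T}. \<bar>x - y j\<bar> / \<bar>y T - y j\<bar>)"
    using assms(1,2) by (simp add: poly_peak_poly abs_mult abs_divide abs_prod prod_dividef)
  also have "\<dots> \<le> (x / y T) * 2 ^ (T - 1)"
    using assms(1,2) ratio_le_2 by (intro mult_left_mono prod_le_power) auto
  finally show ?thesis
    by (simp add: mult.commute)
qed

lemma inverse_power_nodes_separated:
  fixes T j b :: nat
  assumes "1 \<le> j" "j < T" "2 * (real T / (real T + 1)) ^ b \<le> 1"
  shows "2 * inverse (real T ^ b) \<le> inverse (real j ^ b)"
proof -
  have "real j * (real T + 1) \<le> (real T - 1) * (real T + 1)"
    using assms(2) by (intro mult_right_mono) auto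
  also have "\<dots> \<le> real T * real T"
    by (simp add: algebra_simps)
  finally have "real j / real T \<le> real T / (real T + 1)"
    using assms(2) by (simp add: field_simps)
  then have "2 * (real j / real T) ^ b \<le> 1"
    using assms(3) power_mono[of "real j / real T" _ b] by fastforce
  then show ?thesis
    using assms(1,2) by (simp add: power_divide field_simps)
qed

text \<open>Of the exponent \<open>N + 2\<close>, two powers of \<open>T/t\<close> make the bound summable in \<open>t\<close>;
  the other \<open>N\<close> make it small.\<close>

lemma peak_poly_error_le:
  fixes T N t :: nat
  defines "y \<equiv> \<lambda>j. inverse (real j ^ (N + 2))" and "r \<equiv> real T / (real T + 1)"
  assumes "T \<ge> 1" "2 * r ^ N \<le> 1"
  shows "\<bar>(if t + 1 = T then 1 else 0) - poly (peak_poly y T) (y (t + 1))\<bar>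
    \<le> 2 ^ (T - 1) * r ^ N * (real T / real (t + 1))^2"
proof (cases "t + 1 \<le> T")
  case True
  have "poly (peak_poly y T) (y T) = 1"
  proof (rule poly_peak_poly_peak)
    show "y T \<noteq> 0"
      using assms(3) by (simp add: y_def)
    show "y j \<noteq> y T" if "j \<in> {1..<T}" for j
      using that power_strict_mono[of "real j" "real T" "N + 2"]
      unfolding y_def inverse_eq_iff_eq by auto
  qed
  moreover have "poly (peak_poly y T) (y (t + 1)) = 0" if "t + 1 < T"
    using that by (simp add: poly_peak_poly_node)
  ultimately have "poly (peak_poly y T) (y (t + 1)) = (if t + 1 = T then 1 else 0)"
    using True by auto
  then show ?thesis
    by (simp add: r_def)
next
  case False
  have "r ^ (N + 2) \<le> r ^ N"
    by (rule power_decreasing) (auto simp: r_def)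
  then have small: "2 * (real T / (real T + 1)) ^ (N + 2) \<le> 1"
    using assms(4) unfolding r_def by linarith
  have separated: "2 * y T \<le> y j" if "j \<in> {1..<T}" for j
    unfolding y_def by (rule inverse_power_nodes_separated[OF _ _ small]) (use that in auto)
  have below: "y (t + 1) \<le> y j" if "j \<in> {1..<T}" for j
    unfolding y_def by (intro le_imp_inverse_le power_mono) (use that False in auto)
  have "real T / real (t + 1) \<le> r"
    using False assms(3) unfolding r_def by (intro divide_left_mono) auto
  then have ratio: "(real T / real (t + 1)) ^ N \<le> r ^ N"
    by (simp add: power_mono)
  have "\<bar>(if t + 1 = T then 1 else 0) - poly (peak_poly y T) (y (t + 1))\<bar>
      = \<bar>poly (peak_poly y T) (y (t + 1))\<bar>"
    using False by simp
  also have "\<dots> \<le> 2 ^ (T - 1) * (y (t + 1) / y T)"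
    using separated below by (intro abs_poly_peak_poly_le) (use assms(3) in \<open>auto simp: y_def\<close>)
  also have "y (t + 1) / y T = (real T / real (t + 1)) ^ (N + 2)"
    unfolding y_def by (simp add: power_divide inverse_eq_divide)
  also have "\<dots> = (real T / real (t + 1)) ^ N * (real T / real (t + 1))^2"
    by (rule power_add)
  also have "2 ^ (T - 1) * \<dots> \<le> 2 ^ (T - 1) * r ^ N * (real T / real (t + 1))^2"
    using ratio by (simp add: mult.assoc mult_right_mono)
  finally show ?thesis .
qed

lemma summable_shifted_square_ratio: "summable (\<lambda>t. (c / real (t + 1))^2)"
  for c :: real
proof -
  have "summable (\<lambda>t. inverse (real t ^ 2))"
    by (rule inverse_power_summable) simp
  then have "summable (\<lambda>t. c^2 * inverse (real (t + 1) ^ 2))"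
    by (intro summable_mult) (rule summable_ignore_initial_segment)
  then show ?thesis
    unfolding power_divide by (simp only: divide_inverse)
qed

lemma peak_poly_error_sum:
  fixes T N :: nat
  defines "y \<equiv> \<lambda>j. inverse (real j ^ (N + 2))" and "r \<equiv> real T / (real T + 1)"
  assumes "T \<ge> 1" "2 * r ^ N \<le> 1"
  shows "summable (\<lambda>t. \<bar>(if t + 1 = T then 1 else 0) - poly (peak_poly y T) (y (t + 1))\<bar>)"
    and "(\<Sum>t. \<bar>(if t + 1 = T then 1 else 0) - poly (peak_poly y T) (y (t + 1))\<bar>)
      \<le> 2 ^ (T - 1) * r ^ N * (\<Sum>t. (real T / real (t + 1))^2)"
proof -
  let ?err = "\<lambda>t. \<bar>(if t + 1 = T then 1 else 0) - poly (peak_poly y T) (y (t + 1))\<bar>"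
  let ?bound = "\<lambda>t. 2 ^ (T - 1) * r ^ N * (real T / real (t + 1))^2"
  have err_le: "?err t \<le> ?bound t" for t
    unfolding y_def r_def by (rule peak_poly_error_le[OF assms(3,4)[unfolded r_def]])
  have bound_summable: "summable ?bound"
    by (intro summable_mult summable_shifted_square_ratio)
  then show err_summable: "summable ?err"
    by (rule summable_comparison_test'[where N = 0]) (simp only: real_norm_def abs_abs err_le)
  have "suminf ?err \<le> suminf ?bound"
    using err_le err_summable bound_summable by (rule suminf_le)
  also have "\<dots> = 2 ^ (T - 1) * r ^ N * (\<Sum>t. (real T / real (t + 1))^2)"
    by (intro suminf_mult summable_shifted_square_ratio)
  finally show "suminf ?err \<le> \<dots>" .
qed

lemma poly_eq_sum_coeff_from_1:
  fixes p :: "'a::comm_semiring_1 poly"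
  assumes "degree p \<le> m" "coeff p 0 = 0"
  shows "poly p x = (\<Sum>k=1..m. coeff p k * x ^ k)"
proof -
  have "poly p x = (\<Sum>k\<le>degree p. coeff p k * x ^ k)"
    by (rule poly_altdef)
  also have "\<dots> = (\<Sum>k\<le>m. coeff p k * x ^ k)"
    using assms(1) by (intro sum.mono_neutral_left) (auto simp: coeff_eq_0)
  also have "\<dots> = (\<Sum>k=1..m. coeff p k * x ^ k)"
    using assms(2) by (simp add: atMost_atLeast0 sum.atLeast_Suc_atMost)
  finally show ?thesis .
qed

lemma inverse_power_power_eq_powr:
  fixes x :: real
  assumes "x > 0"
  shows "inverse (x ^ b) ^ k = x powr (- (real k * real b))"
proof -
  have "x powr (real k * real b) = x ^ (b * k)"
    using assms powr_realpow[of x "b * k"] by (simp add: mult.commute)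
  then show ?thesis
    by (simp add: powr_minus power_mult power_inverse)
qed

lemma indicator_approximation_by_power_sums:
  fixes T m :: nat and \<epsilon> :: real
  assumes "1 \<le> T" "T \<le> m" "0 < \<epsilon>"
  shows "\<exists>(\<alpha>::nat \<Rightarrow> real) (\<beta>::nat \<Rightarrow> real). (\<forall>k\<in>{1..m}. 1 < \<beta> k) \<and>
    summable (\<lambda>t. \<bar>(if t + 1 = T then 1 else 0) - (\<Sum>k=1..m. \<alpha> k * real (t + 1) powr (- \<beta> k))\<bar>) \<and>
    (\<Sum>t. \<bar>(if t + 1 = T then 1 else 0) - (\<Sum>k=1..m. \<alpha> k * real (t + 1) powr (- \<beta> k))\<bar>) \<le> \<epsilon>"
proof -
  define r where "r = real T / (real T + 1)"
  define S where "S = (\<Sum>t. (real T / real (t + 1))^2)"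
  have "(\<lambda>N. r ^ N) \<longlonglongrightarrow> 0"
    using assms(1) by (intro LIMSEQ_power_zero) (auto simp: r_def)
  then have "(\<lambda>N. 2 * r ^ N) \<longlonglongrightarrow> 0" "(\<lambda>N. 2 ^ (T - 1) * r ^ N * S) \<longlonglongrightarrow> 0"
    by (auto intro: tendsto_mult_right_zero tendsto_mult_left_zero)
  then have "\<forall>\<^sub>F N in sequentially. 2 * r ^ N < 1 \<and> 2 ^ (T - 1) * r ^ N * S < \<epsilon>"
    using assms(3) by (intro eventually_conj order_tendstoD(2)[of _ 0]) auto
  then obtain N where N: "2 * r ^ N < 1" "2 ^ (T - 1) * r ^ N * S < \<epsilon>"
    using eventually_happens[of _ sequentially] by auto
  then have "2 * (real T / (real T + 1)) ^ N \<le> 1"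
    by (simp add: r_def)
  note error_sum = peak_poly_error_sum[OF assms(1) this]
  define y where "y = (\<lambda>j::nat. inverse (real j ^ (N + 2)))"
  define p where "p = peak_poly y T"
  have power_sum_eq: "(\<Sum>k=1..m. coeff p k * real (t + 1) powr (- (real k * real (N + 2))))
      = poly p (y (t + 1))" for t
  proof -
    have "y (t + 1) ^ k = real (t + 1) powr (- (real k * real (N + 2)))" for k
      unfolding y_def by (rule inverse_power_power_eq_powr) simp
    moreover have "degree p \<le> m"
      using degree_peak_poly[OF assms(1), of y] assms(2) unfolding p_def by linarith
    moreover have "coeff p 0 = 0"
      unfolding p_def by (rule coeff_0_peak_poly)
    ultimately show ?thesis
      by (simp only: poly_eq_sum_coeff_from_1)
  qed
  show ?thesis
  proof (intro exI conjI ballI)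
    show "1 < real k * real (N + 2)" if "k \<in> {1..m}" for k
    proof -
      have "real (N + 2) \<le> real k * real (N + 2)"
        using that by simp
      then show ?thesis
        by linarith
    qed
    show "summable (\<lambda>t. \<bar>(if t + 1 = T then 1 else 0)
        - (\<Sum>k=1..m. coeff p k * real (t + 1) powr (- (real k * real (N + 2))))\<bar>)"
      unfolding power_sum_eq unfolding p_def y_def by (rule error_sum(1))
    show "(\<Sum>t. \<bar>(if t + 1 = T then 1 else 0)
        - (\<Sum>k=1..m. coeff p k * real (t + 1) powr (- (real k * real (N + 2))))\<bar>) \<le> \<epsilon>"
      using error_sum(2) N(2) unfolding power_sum_eq unfolding p_def y_def r_def S_def by linarith
  qed
qed

lemma indicator_power_sum_error_le:
  fixes T m n :: nat and a :: real
  assumes "1 \<le> T" "1 \<le> m" "real n \<le> a"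
  shows "\<exists>(\<alpha>::nat \<Rightarrow> real) (\<beta>::nat \<Rightarrow> real). (\<forall>k\<in>{1..m}. 1 < \<beta> k) \<and>
    summable (\<lambda>t. \<bar>(if t + 1 = T then 1 else 0) - (\<Sum>k=1..m. \<alpha> k * real (t + 1) powr (- \<beta> k))\<bar>) \<and>
    (\<Sum>t. \<bar>(if t + 1 = T then 1 else 0) - (\<Sum>k=1..m. \<alpha> k * real (t + 1) powr (- \<beta> k))\<bar>)
      \<le> real T powr a / real m ^ n"
proof (cases "T \<le> m")
  case True
  have "0 < real T powr a / real m ^ n"
    using assms by simp
  then show ?thesis
    using indicator_approximation_by_power_sums[OF assms(1) True] by blast
next
  case False
  have "real m ^ n \<le> real T ^ n"
    using False by (intro power_mono) auto
  also have "\<dots> = real T powr real n"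
    using assms(1) by (simp add: powr_realpow)
  also have "\<dots> \<le> real T powr a"
    using assms by (intro powr_mono) auto
  finally have "1 \<le> real T powr a / real m ^ n"
    using assms(2) by simp
  moreover have "(\<lambda>t. \<bar>(if t + 1 = T then 1 else 0) - (\<Sum>k=1..m. 0 * real (t + 1) powr (- 2))\<bar>)
      = (\<lambda>t. if t = T - 1 then 1 else (0::real))"
    using assms(1) by (auto simp: fun_eq_iff)
  moreover have "(\<lambda>t. if t = T - 1 then 1 else (0::real)) sums 1"
    using sums_single[of "T - 1" "\<lambda>_. 1::real"] by simp
  ultimately show ?thesis
    by (intro exI[of _ "\<lambda>_. 0"] exI[of _ "\<lambda>_. 2"]) (auto simp: sums_iff)
qed

theorem lemmaF4:
  "\<forall>n::nat. n \<ge> 1 \<longrightarrow> (\<exists>C::real. \<forall>T::nat. \<forall>m::nat. T \<ge> 1 \<longrightarrow> m \<ge> 1 \<longrightarrow>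
     (\<exists>(\<alpha>::nat \<Rightarrow> real) (\<beta>::nat \<Rightarrow> real).
        (\<forall>k\<in>{1..m}. \<beta> k > 1) \<and>
        (let \<phi> = (\<lambda>t::nat. \<Sum>k=1..m. \<alpha> k * real t powr (- \<beta> k)) in
           summable (\<lambda>t. \<bar>(if t + 1 = T then 1 else 0) - \<phi> (t + 1)\<bar>) \<and>
           (\<Sum>t. \<bar>(if t + 1 = T then 1 else 0) - \<phi> (t + 1)\<bar>)
             \<le> C * real T powr (1.01 * (real n + 1)) / real m ^ n)))"
  unfolding Let_def
  by (intro allI impI exI[of _ "1::real"], unfold mult_1, rule indicator_power_sum_error_le) auto

end
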